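(* Let $\mathcal{M}=(N,\mathcal{I})$ be a matroid or a $p$-matchoid, let $f:2^N\to\mathbb{R}$ be a normalized submodular function, let $\varepsilon\in(0,1/3)$, and let $\lambda\ge0$ satisfy $(1-\varepsilon)\lambda\le f(\{e\})\le\lambda$ for all $e\in N$. For $\delta\in[0,1]$ let $S_\delta$ denote a random subset of $N$ containing each element independently with probability $\delta$, and consider the two conditions (C1) $\mathbb{E}\bigl|\{e\in N: f_{S_\delta}(e)\le(1-\varepsilon)\lambda\}\bigr|\le\varepsilon|N|$, and (C2) $\mathbb{E}|\mathrm{span}(S_\delta)|\le\varepsilon|N|$. Suppose some $\delta\in[0,1]$ satisfies both, and let $\delta$ be the largest such value. Let $S=S_\delta$ and $I=\{e\in S: f_{S\setminus\{e\}}(e)\ge(1-\varepsilon)\lambda\text{ and } e\notin\mathrm{span}(S\setminus\{e\})\}$. Then: (i) $I\subseteq S$, $I\in\mathcal{I}$ always, and $\mathbb{E}[f(I)]\ge(1-3\varepsilon)\lambda\,\mathbb{E}|S|$; in particular $(I,S)$ is a $(1-3\varepsilon)$-greedy block with respect to $\mathcal{M}$ and $f$; (ii) $\mathbb{E}\bigl|\{e\in N\setminus\mathrm{span}(S): f_S(e)>(1-\varepsilon)\lambda\}\bigr|\le(1-\varepsilon)|N|$.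
   Context: $f$ is normalized if $f(\emptyset)=0$ and submodular if $f(A)+f(B)\ge f(A\cup B)+f(A\cap B)$; $f_S(e)=f(S\cup\{e\})-f(S)$ (so $f_S(e)=0$ if $e\in S$). For a matroid, $\mathrm{span}(S)=\{e:\mathrm{rank}(S\cup\{e\})=\mathrm{rank}(S)\}$. A $p$-matchoid is given by matroids $\mathcal{M}_j=(N_j,\mathcal{I}_j)$, $N_j\subseteq N$, each element in at most $p$ of the $N_j$, with $\mathcal{I}=\{S: S\cap N_j\in\mathcal{I}_j\ \forall j\}$; its span is $\mathrm{span}(S)=\bigcup_j\mathrm{span}_j(S\cap N_j)$, where $\mathrm{span}_j$ is the span in $\mathcal{M}_j$. For a set system $(N,\mathcal{I})$, a real-valued $f$ and $\alpha\in[0,1]$, an $\alpha$-greedy block is a random pair $(I,S)$ with $I\subseteq S\subseteq N$, $I\in\mathcal{I}$ always, and $\mathbb{E}[f(I)]\ge\alpha\,\mathbb{E}[|S|]\cdot\max\{0,\max_{e\in N}f(\{e\})\}$. *)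

theory Defs
  imports Complex_Main
begin

definition matroid :: "'a set \<Rightarrow> 'a set set \<Rightarrow> bool" where
  "matroid E Ind \<longleftrightarrow> finite E \<and> Ind \<subseteq> Pow E \<and> {} \<in> Ind
     \<and> (\<forall>A B. A \<in> Ind \<and> B \<subseteq> A \<longrightarrow> B \<in> Ind)
     \<and> (\<forall>A B. A \<in> Ind \<and> B \<in> Ind \<and> card A < card B \<longrightarrow> (\<exists>e\<in>B - A. insert e A \<in> Ind))"

definition mrank :: "'a set set \<Rightarrow> 'a set \<Rightarrow> nat" where
  "mrank Ind S = Max {card X | X. X \<subseteq> S \<and> X \<in> Ind}"

definition mspan :: "'a set \<Rightarrow> 'a set set \<Rightarrow> 'a set \<Rightarrow> 'a set" where
  "mspan E Ind S = {e \<in> E. mrank Ind (insert e S) = mrank Ind S}"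

definition p_matchoid :: "'a set \<Rightarrow> 'j set \<Rightarrow> ('j \<Rightarrow> 'a set) \<Rightarrow> ('j \<Rightarrow> 'a set set) \<Rightarrow> nat \<Rightarrow> bool" where
  "p_matchoid N J Nj Ij p \<longleftrightarrow> finite N \<and> finite J
     \<and> (\<forall>j\<in>J. Nj j \<subseteq> N \<and> matroid (Nj j) (Ij j))
     \<and> (\<forall>e\<in>N. card {j \<in> J. e \<in> Nj j} \<le> p)"

definition matchoid_indep :: "'a set \<Rightarrow> 'j set \<Rightarrow> ('j \<Rightarrow> 'a set) \<Rightarrow> ('j \<Rightarrow> 'a set set) \<Rightarrow> 'a set set" where
  "matchoid_indep N J Nj Ij = {S. S \<subseteq> N \<and> (\<forall>j\<in>J. S \<inter> Nj j \<in> Ij j)}"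

definition matchoid_span :: "'j set \<Rightarrow> ('j \<Rightarrow> 'a set) \<Rightarrow> ('j \<Rightarrow> 'a set set) \<Rightarrow> 'a set \<Rightarrow> 'a set" where
  "matchoid_span J Nj Ij S = (\<Union>j\<in>J. mspan (Nj j) (Ij j) (S \<inter> Nj j))"

definition normalized :: "('a set \<Rightarrow> real) \<Rightarrow> bool" where
  "normalized f \<longleftrightarrow> f {} = 0"

definition submodular_on :: "'a set \<Rightarrow> ('a set \<Rightarrow> real) \<Rightarrow> bool" where
  "submodular_on N f \<longleftrightarrow> (\<forall>A B. A \<subseteq> N \<longrightarrow> B \<subseteq> N \<longrightarrow> f A + f B \<ge> f (A \<union> B) + f (A \<inter> B))"

definition marg :: "('a set \<Rightarrow> real) \<Rightarrow> 'a set \<Rightarrow> 'a \<Rightarrow> real" where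
  "marg f S e = f (insert e S) - f S"

text \<open>Expectation of g(S_delta), where S_delta contains every element of N independently
  with probability delta (with the convention 0^0 = 1).\<close>
definition expect_rand :: "'a set \<Rightarrow> real \<Rightarrow> ('a set \<Rightarrow> real) \<Rightarrow> real" where
  "expect_rand N \<delta> g = (\<Sum>S\<in>Pow N. \<delta> ^ card S * (1 - \<delta>) ^ card (N - S) * g S)"

text \<open>(I,S) with S = S_delta and I = Imap S is an alpha-greedy block.\<close>
definition greedy_block_rand :: "'a set \<Rightarrow> 'a set set \<Rightarrow> ('a set \<Rightarrow> real) \<Rightarrow> real \<Rightarrow> real \<Rightarrow> ('a set \<Rightarrow> 'a set) \<Rightarrow> bool" where
  "greedy_block_rand N Ind f \<alpha> \<delta> Imap \<longleftrightarrow>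
     (\<forall>S\<subseteq>N. Imap S \<subseteq> S \<and> Imap S \<in> Ind) \<and>
     expect_rand N \<delta> (\<lambda>S. f (Imap S)) \<ge>
       \<alpha> * expect_rand N \<delta> (\<lambda>S. real (card S)) *
       max 0 (if N = {} then 0 else Max ((\<lambda>e. f {e}) ` N))"

end

theory Submission
  imports Defs
begin

text \<open>Membership of a single element in \<open>S\<^sub>\<delta>\<close> is independent of the rest of \<open>S\<^sub>\<delta>\<close>. Hence the
  expected number of elements \<open>e \<in> S\<close> that are bad with respect to \<open>S - {e}\<close> (small marginal gain,
  or spanned) is \<open>\<delta>/(1-\<delta>)\<close> times the expected number of bad elements outside \<open>S\<close>, which (C1) and
  (C2) bound by \<open>\<epsilon>|N|\<close>; (C1) also forces \<open>\<delta> \<le> \<epsilon>\<close>, since every element of \<open>S\<close> has marginal gain 0.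
  All other elements of \<open>S\<close> lie in \<open>I\<close>, which is independent because an element not spanned by
  \<open>S - {e}\<close> lies in every basis of \<open>S\<close>, and \<open>f(I) \<ge> (1-\<epsilon>)\<lambda>|I|\<close> by submodularity. For (ii), both
  expectations are polynomials in \<open>\<delta>\<close>, so maximality of \<open>\<delta>\<close> makes (C1) or (C2) tight, and the
  free elements of large gain are disjoint from the bad elements counted there.\<close>

section \<open>Expectations over random subsets\<close>

lemma expect_rand_cong:
  "(\<And>S. S \<subseteq> N \<Longrightarrow> g S = h S) \<Longrightarrow> expect_rand N d g = expect_rand N d h"
  unfolding expect_rand_def by (rule sum.cong) auto

lemma expect_rand_mono:
  "0 \<le> d \<Longrightarrow> d \<le> 1 \<Longrightarrow> (\<And>S. S \<subseteq> N \<Longrightarrow> g S \<le> h S) \<Longrightarrow> expect_rand N d g \<le> expect_rand N d h"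
  unfolding expect_rand_def by (intro sum_mono mult_left_mono) auto

lemma expect_rand_sum:
  "expect_rand N d (\<lambda>S. \<Sum>e\<in>A. h e S) = (\<Sum>e\<in>A. expect_rand N d (h e))"
  unfolding expect_rand_def by (simp add: sum_distrib_left sum.swap[of _ A])

lemma expect_rand_diff:
  "expect_rand N d (\<lambda>S. g S - h S) = expect_rand N d g - expect_rand N d h"
  unfolding expect_rand_def by (simp add: algebra_simps sum_subtractf)

lemma expect_rand_cmult:
  "expect_rand N d (\<lambda>S. c * g S) = c * expect_rand N d g"
  unfolding expect_rand_def by (simp add: algebra_simps sum_distrib_left)

lemma expect_rand_insert:
  assumes "finite N" "e \<notin> N"
  shows "expect_rand (insert e N) d h
           = d * expect_rand N d (\<lambda>S. h (insert e S)) + (1 - d) * expect_rand N d h"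
proof -
  let ?w = "\<lambda>M S. d ^ card S * (1 - d) ^ card (M - S)"
  have inj: "inj_on (insert e) (Pow N)" using assms by (auto simp: inj_on_def)
  have "expect_rand (insert e N) d h
      = (\<Sum>S\<in>Pow N. ?w (insert e N) S * h S) + (\<Sum>S\<in>insert e ` Pow N. ?w (insert e N) S * h S)"
    unfolding expect_rand_def Pow_insert using assms by (intro sum.union_disjoint) auto
  also have "(\<Sum>S\<in>Pow N. ?w (insert e N) S * h S) = (\<Sum>S\<in>Pow N. (1 - d) * (?w N S * h S))"
  proof (rule sum.cong)
    fix S assume "S \<in> Pow N"
    then have "insert e N - S = insert e (N - S)" "e \<notin> N - S" "finite (N - S)" using assms by auto
    then show "?w (insert e N) S * h S = (1 - d) * (?w N S * h S)" by simp
  qed simp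
  also have "(\<Sum>S\<in>insert e ` Pow N. ?w (insert e N) S * h S)
           = (\<Sum>S\<in>Pow N. d * (?w N S * h (insert e S)))"
    unfolding sum.reindex[OF inj] o_def
  proof (rule sum.cong)
    fix S assume "S \<in> Pow N"
    then have "insert e N - insert e S = N - S" "e \<notin> S" "finite S"
      using assms finite_subset by auto
    then show "?w (insert e N) (insert e S) * h (insert e S) = d * (?w N S * h (insert e S))" by simp
  qed simp
  finally show ?thesis unfolding expect_rand_def sum_distrib_left[symmetric] by simp
qed

lemma expect_rand_const:
  assumes "finite N"
  shows "expect_rand N d (\<lambda>S. c) = c"
  using assms
proof (induction N rule: finite_induct)
  case empty then show ?case by (simp add: expect_rand_def)
next
  case (insert x F) then show ?case by (simp add: expect_rand_insert algebra_simps)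
qed

lemma expect_rand_nonneg:
  "0 \<le> d \<Longrightarrow> d \<le> 1 \<Longrightarrow> (\<And>S. S \<subseteq> N \<Longrightarrow> 0 \<le> g S) \<Longrightarrow> 0 \<le> expect_rand N d g"
  unfolding expect_rand_def by (intro sum_nonneg mult_nonneg_nonneg) auto

lemma expect_rand_if_mem:
  assumes "finite N" "e \<in> N"
  shows "expect_rand N d (\<lambda>S. if e \<in> S then g (S - {e}) else 0) = d * expect_rand (N - {e}) d g"
proof -
  have "expect_rand (insert e (N - {e})) d (\<lambda>S. if e \<in> S then g (S - {e}) else 0)
      = d * expect_rand (N - {e}) d (\<lambda>S. g (insert e S - {e})) + (1 - d) * expect_rand (N - {e}) d (\<lambda>S. 0)"
    using assms by (subst expect_rand_insert) (auto intro!: expect_rand_cong)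
  also have "expect_rand (N - {e}) d (\<lambda>S. g (insert e S - {e})) = expect_rand (N - {e}) d g"
    by (rule expect_rand_cong) (metis Diff_insert_absorb insert_Diff_single subset_Diff_insert)
  finally show ?thesis using assms by (simp add: insert_absorb expect_rand_const)
qed

lemma expect_rand_if_not_mem:
  assumes "finite N" "e \<in> N"
  shows "expect_rand N d (\<lambda>S. if e \<notin> S then g S else 0) = (1 - d) * expect_rand (N - {e}) d g"
proof -
  have "expect_rand (insert e (N - {e})) d (\<lambda>S. if e \<notin> S then g S else 0)
      = d * expect_rand (N - {e}) d (\<lambda>S. 0) + (1 - d) * expect_rand (N - {e}) d g"
    using assms by (subst expect_rand_insert) (auto intro!: expect_rand_cong)
  then show ?thesis using assms by (simp add: insert_absorb expect_rand_const)
qed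

lemma real_card_filter_sum:
  "finite N \<Longrightarrow> real (card {e \<in> N. P e}) = (\<Sum>e\<in>N. if P e then 1 else 0)"
  by (simp add: sum.If_cases Int_def)

lemma real_card_le_diff_of_disjoint:
  assumes "finite N" "X \<subseteq> N" "A \<subseteq> N" "X \<inter> A = {}"
  shows "real (card X) \<le> real (card N) - real (card A)"
proof -
  have "finite X" "finite A" using assms finite_subset by blast+
  then have "card X + card A = card (X \<union> A)" using assms(4) by (simp add: card_Un_disjoint)
  also have "\<dots> \<le> card N" using assms by (intro card_mono) auto
  finally show ?thesis by linarith
qed

text \<open>Both sides equal \<open>\<delta>(1-\<delta>)\<close> times the sum over \<open>e \<in> N\<close> of the probability that \<open>P e\<close> holds
  for a random subset of \<open>N - {e}\<close>: whether \<open>e\<close> is sampled is independent of the rest.\<close>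
lemma expect_rand_card_exchange:
  assumes "finite N"
  shows "(1 - d) * expect_rand N d (\<lambda>S. real (card {e \<in> S. P e (S - {e})}))
       = d * expect_rand N d (\<lambda>S. real (card {e \<in> N - S. P e S}))"
proof -
  let ?p = "\<lambda>e T. if P e T then 1 else 0 :: real"
  have "expect_rand N d (\<lambda>S. real (card {e \<in> S. P e (S - {e})}))
      = expect_rand N d (\<lambda>S. \<Sum>e\<in>N. if e \<in> S then ?p e (S - {e}) else 0)"
  proof (rule expect_rand_cong)
    fix S assume "S \<subseteq> N"
    then have "{e \<in> S. P e (S - {e})} = {e \<in> N. e \<in> S \<and> P e (S - {e})}" by blast
    then show "real (card {e \<in> S. P e (S - {e})}) = (\<Sum>e\<in>N. if e \<in> S then ?p e (S - {e}) else 0)"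
      using assms by (auto simp: real_card_filter_sum intro!: sum.cong)
  qed
  also have "\<dots> = (\<Sum>e\<in>N. d * expect_rand (N - {e}) d (?p e))"
    unfolding expect_rand_sum
    by (intro sum.cong refl) (use expect_rand_if_mem[OF assms, of _ d "?p _"] in simp)
  finally have mem: "expect_rand N d (\<lambda>S. real (card {e \<in> S. P e (S - {e})}))
      = d * (\<Sum>e\<in>N. expect_rand (N - {e}) d (?p e))" by (simp add: sum_distrib_left)
  have "expect_rand N d (\<lambda>S. real (card {e \<in> N - S. P e S}))
      = expect_rand N d (\<lambda>S. \<Sum>e\<in>N. if e \<notin> S then ?p e S else 0)"
  proof (rule expect_rand_cong)
    fix S
    have "{e \<in> N - S. P e S} = {e \<in> N. e \<notin> S \<and> P e S}" by blast
    then show "real (card {e \<in> N - S. P e S}) = (\<Sum>e\<in>N. if e \<notin> S then ?p e S else 0)"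
      using assms by (auto simp: real_card_filter_sum intro!: sum.cong)
  qed
  also have "\<dots> = (\<Sum>e\<in>N. (1 - d) * expect_rand (N - {e}) d (?p e))"
    unfolding expect_rand_sum
    by (intro sum.cong refl) (use expect_rand_if_not_mem[OF assms, of _ d "?p _"] in simp)
  finally show ?thesis using mem by (simp add: sum_distrib_left ac_simps)
qed

lemma expect_rand_card_exchange_le:
  assumes "finite N" "0 \<le> d" "d \<le> 1"
    and "\<And>S. S \<subseteq> N \<Longrightarrow> {e \<in> N - S. P e S} \<subseteq> Q S" "\<And>S. S \<subseteq> N \<Longrightarrow> Q S \<subseteq> N"
    and "expect_rand N d (\<lambda>S. real (card (Q S))) \<le> b"
  shows "(1 - d) * expect_rand N d (\<lambda>S. real (card {e \<in> S. P e (S - {e})})) \<le> d * b"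
proof -
  have "expect_rand N d (\<lambda>S. real (card {e \<in> N - S. P e S})) \<le> expect_rand N d (\<lambda>S. real (card (Q S)))"
  proof (intro expect_rand_mono of_nat_mono card_mono assms(2,3))
    fix S assume "S \<subseteq> N"
    show "finite (Q S)" using finite_subset[OF assms(5)[OF \<open>S \<subseteq> N\<close>] assms(1)] .
    show "{e \<in> N - S. P e S} \<subseteq> Q S" using assms(4)[OF \<open>S \<subseteq> N\<close>] .
  qed
  then show ?thesis
    unfolding expect_rand_card_exchange[OF assms(1)] using assms(2,6) by (intro mult_left_mono) auto
qed

lemma expect_rand_card:
  assumes "finite N"
  shows "expect_rand N d (\<lambda>S. real (card S)) = d * real (card N)"
proof -
  have "expect_rand N d (\<lambda>S. real (card (N - S))) = expect_rand N d (\<lambda>S. real (card N) - real (card S))"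
    using assms by (intro expect_rand_cong) (simp add: card_Diff_subset finite_subset of_nat_diff card_mono)
  moreover have "{e \<in> A. True} = A" for A :: "'a set" by simp
  ultimately have "(1 - d) * expect_rand N d (\<lambda>S. real (card S))
           = d * (real (card N) - expect_rand N d (\<lambda>S. real (card S)))"
    using expect_rand_card_exchange[OF assms, of d "\<lambda>_ _. True"]
    by (simp only: expect_rand_diff expect_rand_const assms)
  then show ?thesis by (simp add: algebra_simps)
qed

lemma continuous_expect_rand: "continuous_on A (\<lambda>d. expect_rand N d g)"
  unfolding expect_rand_def by (intro continuous_intros)

text \<open>Both expectations are polynomials in \<open>\<delta>\<close>, so beyond a largest admissible \<open>\<delta> < 1\<close> the
  bounds can only fail if one of them is already tight at \<open>\<delta>\<close>.\<close>
lemma expect_rand_bound_tight_at_max: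
  assumes "0 \<le> \<delta>" "\<delta> < 1"
    and max: "\<forall>d. 0 \<le> d \<and> d \<le> 1 \<and> expect_rand N d g \<le> t \<and> expect_rand N d h \<le> t \<longrightarrow> d \<le> \<delta>"
  shows "t \<le> expect_rand N \<delta> g \<or> t \<le> expect_rand N \<delta> h"
proof (rule ccontr)
  assume "\<not> ?thesis"
  then have "expect_rand N \<delta> g < t" "expect_rand N \<delta> h < t" by auto
  moreover have "((\<lambda>d. expect_rand N d u) \<longlongrightarrow> expect_rand N \<delta> u) (at_right \<delta>)" for u
    using continuous_expect_rand[of UNIV N u]
    by (simp add: continuous_on_def filterlim_at_split)
  ultimately have "\<forall>\<^sub>F d in at_right \<delta>. expect_rand N d g < t \<and> expect_rand N d h < t"
    by (intro eventually_conj order_tendstoD(2))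
  then obtain b where b: "b > \<delta>" "\<And>d. \<delta> < d \<Longrightarrow> d < b \<Longrightarrow> expect_rand N d g < t \<and> expect_rand N d h < t"
    unfolding eventually_at_right_field by blast
  define d where "d = (\<delta> + min b 1) / 2"
  have d: "\<delta> < d" "d < b" "d \<le> 1" unfolding d_def using b(1) assms(2) by auto
  then have "expect_rand N d g \<le> t" "expect_rand N d h \<le> t" using b(2) by (auto simp: less_imp_le)
  then have "d \<le> \<delta>" using max d(1,3) assms(1) by auto
  then show False using d(1) by simp
qed

section \<open>Submodular functions\<close>

lemma marg_mem: "e \<in> S \<Longrightarrow> marg f S e = 0"
  by (simp add: marg_def insert_absorb)

lemma marg_antimono:
  assumes "submodular_on N f" "A \<subseteq> B" "B \<subseteq> N" "e \<in> N" "e \<notin> B"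
  shows "marg f B e \<le> marg f A e"
proof -
  have "insert e A \<subseteq> N" using assms by blast
  then have "f (insert e A \<union> B) + f (insert e A \<inter> B) \<le> f (insert e A) + f B"
    using assms(1,3) unfolding submodular_on_def by blast
  moreover have "insert e A \<union> B = insert e B" "insert e A \<inter> B = A" using assms by auto
  ultimately have "f (insert e B) + f A \<le> f (insert e A) + f B" by simp
  then show ?thesis unfolding marg_def by linarith
qed

lemma submodular_mult_card_le:
  assumes "submodular_on N f" "normalized f" "S \<subseteq> N" "finite I" "I \<subseteq> S"
    and "\<forall>e\<in>I. c \<le> marg f (S - {e}) e"
  shows "c * real (card I) \<le> f I"
  using assms(4-6)
proof (induction I rule: finite_induct)
  case empty then show ?case using assms(2) by (simp add: normalized_def)
next
  case (insert x F)
  have "marg f (S - {x}) x \<le> marg f F x"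
    by (rule marg_antimono[OF assms(1)]) (use insert assms(3) in auto)
  then have "f F + c \<le> f (insert x F)" using insert unfolding marg_def by auto
  then show ?case using insert by (simp add: algebra_simps)
qed

section \<open>Matroids and matchoids\<close>

lemma mrank_witnesses:
  assumes "matroid E Ind" "Y \<subseteq> E"
  shows "finite {card X | X. X \<subseteq> Y \<and> X \<in> Ind}" "{card X | X. X \<subseteq> Y \<and> X \<in> Ind} \<noteq> {}"
proof -
  have "finite Y" using assms finite_subset by (auto simp: matroid_def)
  moreover have "{card X | X. X \<subseteq> Y \<and> X \<in> Ind} \<subseteq> card ` Pow Y" by blast
  ultimately show "finite {card X | X. X \<subseteq> Y \<and> X \<in> Ind}" using finite_subset by blast
  have "{} \<in> Ind" using assms(1) by (simp add: matroid_def)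
  then show "{card X | X. X \<subseteq> Y \<and> X \<in> Ind} \<noteq> {}" by blast
qed

lemma mrank_obtain_indep:
  assumes "matroid E Ind" "Y \<subseteq> E"
  obtains B where "B \<subseteq> Y" "B \<in> Ind" "card B = mrank Ind Y"
  using Max_in[OF mrank_witnesses[OF assms]] unfolding mrank_def by auto

lemma mrank_ge_card:
  assumes "matroid E Ind" "Y \<subseteq> E" "X \<subseteq> Y" "X \<in> Ind"
  shows "card X \<le> mrank Ind Y"
  unfolding mrank_def using assms(3,4) by (intro Max_ge[OF mrank_witnesses(1)[OF assms(1,2)]]) blast

lemma mrank_mono:
  assumes "matroid E Ind" "Y \<subseteq> E" "X \<subseteq> Y"
  shows "mrank Ind X \<le> mrank Ind Y"
proof -
  have "X \<subseteq> E" using assms(2,3) by blast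
  then obtain B where "B \<subseteq> X" "B \<in> Ind" "card B = mrank Ind X"
    using mrank_obtain_indep[OF assms(1)] by blast
  then show ?thesis using mrank_ge_card[OF assms(1,2), of B] assms(3) by simp
qed

text \<open>An element whose removal lowers the rank of \<open>Y\<close> lies in every maximum independent subset
  of \<open>Y\<close>; so the set of such elements is contained in one of them.\<close>
lemma matroid_indep_of_rank_drop:
  assumes M: "matroid E Ind" and "Y \<subseteq> E" "X \<subseteq> Y"
    and drop: "\<forall>e\<in>X. mrank Ind (Y - {e}) \<noteq> mrank Ind Y"
  shows "X \<in> Ind"
proof -
  obtain B where B: "B \<subseteq> Y" "B \<in> Ind" "card B = mrank Ind Y"
    using mrank_obtain_indep[OF M \<open>Y \<subseteq> E\<close>] by blast
  have "X \<subseteq> B"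
  proof
    fix e assume "e \<in> X"
    show "e \<in> B"
    proof (rule ccontr)
      assume "e \<notin> B"
      then have "mrank Ind Y \<le> mrank Ind (Y - {e})"
        using B mrank_ge_card[OF M, of "Y - {e}" B] \<open>Y \<subseteq> E\<close> by auto
      moreover have "mrank Ind (Y - {e}) \<le> mrank Ind Y" using mrank_mono[OF M \<open>Y \<subseteq> E\<close>] by blast
      ultimately show False using drop \<open>e \<in> X\<close> by auto
    qed
  qed
  moreover have "\<forall>A B. A \<in> Ind \<and> B \<subseteq> A \<longrightarrow> B \<in> Ind" using M by (simp add: matroid_def)
  ultimately show ?thesis using B(2) by blast
qed

lemma matchoid_span_subset: "p_matchoid N J Nj Ij p \<Longrightarrow> matchoid_span J Nj Ij S \<subseteq> N"
  unfolding p_matchoid_def matchoid_span_def mspan_def by blast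

lemma matchoid_indep_of_not_in_span:
  assumes M: "p_matchoid N J Nj Ij p" and "S \<subseteq> N" "X \<subseteq> S"
    and span: "\<forall>e\<in>X. e \<notin> matchoid_span J Nj Ij (S - {e})"
  shows "X \<in> matchoid_indep N J Nj Ij"
  unfolding matchoid_indep_def
proof (intro CollectI conjI ballI)
  show "X \<subseteq> N" using assms by blast
  fix j assume j: "j \<in> J"
  then have Mj: "matroid (Nj j) (Ij j)" using M by (simp add: p_matchoid_def)
  show "X \<inter> Nj j \<in> Ij j"
  proof (rule matroid_indep_of_rank_drop[OF Mj, of "S \<inter> Nj j"])
    show "\<forall>e\<in>X \<inter> Nj j. mrank (Ij j) (S \<inter> Nj j - {e}) \<noteq> mrank (Ij j) (S \<inter> Nj j)"
    proof
      fix e assume e: "e \<in> X \<inter> Nj j"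
      then have "e \<notin> mspan (Nj j) (Ij j) ((S - {e}) \<inter> Nj j)"
        using span j unfolding matchoid_span_def by blast
      moreover have "(S - {e}) \<inter> Nj j = S \<inter> Nj j - {e}" "insert e (S \<inter> Nj j - {e}) = S \<inter> Nj j"
        using e \<open>X \<subseteq> S\<close> by auto
      ultimately show "mrank (Ij j) (S \<inter> Nj j - {e}) \<noteq> mrank (Ij j) (S \<inter> Nj j)"
        using e unfolding mspan_def by auto
    qed
  qed (use \<open>X \<subseteq> S\<close> in auto)
qed

section \<open>The greedy block\<close>

definition greedy_core ::
    "('a set \<Rightarrow> real) \<Rightarrow> 'j set \<Rightarrow> ('j \<Rightarrow> 'a set) \<Rightarrow> ('j \<Rightarrow> 'a set set) \<Rightarrow> real \<Rightarrow> 'a set \<Rightarrow> 'a set" where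
  "greedy_core f J Nj Ij c S =
     {e \<in> S. c \<le> marg f (S - {e}) e \<and> e \<notin> matchoid_span J Nj Ij (S - {e})}"

lemma greedy_core_subset: "greedy_core f J Nj Ij c S \<subseteq> S"
  unfolding greedy_core_def by blast

lemma greedy_core_indep:
  "p_matchoid N J Nj Ij p \<Longrightarrow> S \<subseteq> N \<Longrightarrow> greedy_core f J Nj Ij c S \<in> matchoid_indep N J Nj Ij"
  by (rule matchoid_indep_of_not_in_span) (auto simp: greedy_core_def)

lemma greedy_core_value_ge:
  assumes M: "p_matchoid N J Nj Ij p" and f: "normalized f" "submodular_on N f"
    and "S \<subseteq> N" "0 \<le> c"
  shows "c * (real (card S) - real (card {e \<in> S. marg f (S - {e}) e < c})
               - real (card {e \<in> S. e \<in> matchoid_span J Nj Ij (S - {e})}))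
         \<le> f (greedy_core f J Nj Ij c S)"
proof -
  let ?I = "greedy_core f J Nj Ij c S"
  let ?A = "{e \<in> S. marg f (S - {e}) e < c}"
  let ?B = "{e \<in> S. e \<in> matchoid_span J Nj Ij (S - {e})}"
  have "finite S" using M \<open>S \<subseteq> N\<close> finite_subset by (auto simp: p_matchoid_def)
  then have fin: "finite ?I" "finite ?A" "finite ?B"
    using finite_subset[OF greedy_core_subset] by auto
  have "S \<subseteq> ?I \<union> ?A \<union> ?B" unfolding greedy_core_def by auto
  then have "card S \<le> card (?I \<union> ?A \<union> ?B)" using fin by (intro card_mono) auto
  also have "\<dots> \<le> card ?I + card ?A + card ?B"
    using card_Un_le[of "?I \<union> ?A" ?B] card_Un_le[of ?I ?A] by linarith
  finally have "c * (real (card S) - real (card ?A) - real (card ?B)) \<le> c * real (card ?I)"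
    using \<open>0 \<le> c\<close> by (intro mult_left_mono) auto
  also have "\<dots> \<le> f ?I"
    by (rule submodular_mult_card_le[OF f(2,1) \<open>S \<subseteq> N\<close> fin(1) greedy_core_subset])
       (auto simp: greedy_core_def)
  finally show ?thesis .
qed

text \<open>Every element of the sample has zero marginal gain, so condition (C1) bounds the sampling rate.\<close>
lemma sampling_rate_le:
  assumes "finite N" "0 \<le> d" "d \<le> 1" "0 \<le> c"
    and "expect_rand N d (\<lambda>S. real (card {e \<in> N. marg f S e \<le> c})) \<le> eps * real (card N)"
  shows "d * real (card N) \<le> eps * real (card N)"
proof -
  have "expect_rand N d (\<lambda>S. real (card S)) \<le> expect_rand N d (\<lambda>S. real (card {e \<in> N. marg f S e \<le> c}))"
    using assms(1-4) by (intro expect_rand_mono card_mono of_nat_mono) (auto simp: marg_mem)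
  then show ?thesis using assms(5) expect_rand_card[OF assms(1)] by simp
qed

lemma expected_greedy_core_value_ge:
  assumes M: "p_matchoid N J Nj Ij p" and f: "normalized f" "submodular_on N f"
    and "0 \<le> eps" "eps \<le> 1" "0 \<le> lam" "0 \<le> \<delta>" "\<delta> \<le> 1"
    and C1: "expect_rand N \<delta> (\<lambda>S. real (card {e \<in> N. marg f S e \<le> (1 - eps) * lam}))
               \<le> eps * real (card N)"
    and C2: "expect_rand N \<delta> (\<lambda>S. real (card (matchoid_span J Nj Ij S))) \<le> eps * real (card N)"
  shows "(1 - 3 * eps) * lam * expect_rand N \<delta> (\<lambda>S. real (card S))
           \<le> expect_rand N \<delta> (\<lambda>S. f (greedy_core f J Nj Ij ((1 - eps) * lam) S))"
proof -
  define c where "c = (1 - eps) * lam"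
  define Sp where "Sp = matchoid_span J Nj Ij"
  define A where "A = expect_rand N \<delta> (\<lambda>S. real (card {e \<in> S. marg f (S - {e}) e < c}))"
  define B where "B = expect_rand N \<delta> (\<lambda>S. real (card {e \<in> S. e \<in> Sp (S - {e})}))"
  have finN: "finite N" using M by (simp add: p_matchoid_def)
  have "0 \<le> c" unfolding c_def using assms by simp
  have A: "(1 - \<delta>) * A \<le> \<delta> * (eps * real (card N))" unfolding A_def
    by (rule expect_rand_card_exchange_le[OF finN \<open>0 \<le> \<delta>\<close> \<open>\<delta> \<le> 1\<close>, of _ "\<lambda>S. {e \<in> N. marg f S e \<le> c}"])
       (use C1 in \<open>auto simp: c_def\<close>)
  have B: "(1 - \<delta>) * B \<le> \<delta> * (eps * real (card N))" unfolding B_def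
    by (rule expect_rand_card_exchange_le[OF finN \<open>0 \<le> \<delta>\<close> \<open>\<delta> \<le> 1\<close>, of _ Sp])
       (use C2 matchoid_span_subset[OF M] in \<open>auto simp: Sp_def\<close>)
  have "c * (A + B) \<le> 2 * lam * eps * \<delta> * real (card N)"
  proof (cases "N = {}")
    case True
    then have "A = 0" "B = 0" unfolding A_def B_def by (simp_all add: expect_rand_def)
    then show ?thesis using True by simp
  next
    case False
    then have "\<delta> \<le> eps"
      using sampling_rate_le[OF finN \<open>0 \<le> \<delta>\<close> \<open>\<delta> \<le> 1\<close> \<open>0 \<le> c\<close>] C1 finN by (simp add: c_def card_gt_0_iff)
    moreover have "0 \<le> A + B" unfolding A_def B_def using \<open>0 \<le> \<delta>\<close> \<open>\<delta> \<le> 1\<close>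
      by (intro add_nonneg_nonneg expect_rand_nonneg) auto
    ultimately have "(1 - eps) * (A + B) \<le> 2 * eps * \<delta> * real (card N)"
      using A B mult_right_mono[of "1 - eps" "1 - \<delta>" "A + B"] by (simp add: algebra_simps)
    then show ?thesis unfolding c_def using \<open>0 \<le> lam\<close> mult_left_mono by (fastforce simp: ac_simps)
  qed
  moreover have "expect_rand N \<delta> (\<lambda>S. c * (real (card S) - real (card {e \<in> S. marg f (S - {e}) e < c})
                 - real (card {e \<in> S. e \<in> Sp (S - {e})})))
      \<le> expect_rand N \<delta> (\<lambda>S. f (greedy_core f J Nj Ij c S))"
    unfolding Sp_def using \<open>0 \<le> \<delta>\<close> \<open>\<delta> \<le> 1\<close>
    by (intro expect_rand_mono greedy_core_value_ge[OF M f _ \<open>0 \<le> c\<close>])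
  then have "c * (\<delta> * real (card N) - A - B) \<le> expect_rand N \<delta> (\<lambda>S. f (greedy_core f J Nj Ij c S))"
    by (simp add: expect_rand_cmult expect_rand_diff expect_rand_card finN A_def B_def)
  ultimately show ?thesis
    unfolding expect_rand_card[OF finN] c_def by (simp add: algebra_simps)
qed

lemma expected_free_high_gain_le:
  fixes f :: "'a set \<Rightarrow> real" and eps lam \<delta> :: real
  assumes M: "p_matchoid N J Nj Ij p" and "eps < 1" "0 \<le> lam" "0 \<le> \<delta>" "\<delta> \<le> 1"
  defines "C1 \<equiv> \<lambda>d. expect_rand N d (\<lambda>S. real (card {e \<in> N. marg f S e \<le> (1 - eps) * lam}))
                   \<le> eps * real (card N)"
    and "C2 \<equiv> \<lambda>d. expect_rand N d (\<lambda>S. real (card (matchoid_span J Nj Ij S))) \<le> eps * real (card N)"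
  assumes "C1 \<delta>" and max: "\<forall>d. 0 \<le> d \<and> d \<le> 1 \<and> C1 d \<and> C2 d \<longrightarrow> d \<le> \<delta>"
  shows "expect_rand N \<delta> (\<lambda>S. real (card {e \<in> N - matchoid_span J Nj Ij S. marg f S e > (1 - eps) * lam}))
           \<le> (1 - eps) * real (card N)"
proof (cases "N = {}")
  case True
  then show ?thesis by (simp add: expect_rand_def)
next
  case False
  define c where "c = (1 - eps) * lam"
  define Sp where "Sp = matchoid_span J Nj Ij"
  define G where "G = (\<lambda>S. real (card {e \<in> N - Sp S. marg f S e > c}))"
  define L where "L = (\<lambda>S. real (card {e \<in> N. marg f S e \<le> c}))"
  define B where "B = (\<lambda>S. real (card (Sp S)))"
  have finN: "finite N" using M by (simp add: p_matchoid_def)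
  have "0 \<le> c" unfolding c_def using assms(2,3) by simp
  then have "\<delta> * real (card N) \<le> eps * real (card N)"
    using sampling_rate_le[OF finN \<open>0 \<le> \<delta>\<close> \<open>\<delta> \<le> 1\<close>] \<open>C1 \<delta>\<close> unfolding C1_def c_def by blast
  then have "\<delta> \<le> eps" using False finN by (simp add: card_gt_0_iff)
  have "eps * real (card N) \<le> expect_rand N \<delta> L \<or> eps * real (card N) \<le> expect_rand N \<delta> B"
  proof (rule expect_rand_bound_tight_at_max[OF \<open>0 \<le> \<delta>\<close>])
    show "\<delta> < 1" using \<open>\<delta> \<le> eps\<close> \<open>eps < 1\<close> by simp
    show "\<forall>d. 0 \<le> d \<and> d \<le> 1 \<and> expect_rand N d L \<le> eps * real (card N)
                \<and> expect_rand N d B \<le> eps * real (card N) \<longrightarrow> d \<le> \<delta>"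
      using max unfolding C1_def C2_def L_def B_def c_def Sp_def by blast
  qed
  moreover have "expect_rand N \<delta> G \<le> real (card N) - expect_rand N \<delta> H"
    if "\<And>S. S \<subseteq> N \<Longrightarrow> G S \<le> real (card N) - H S" for H
  proof -
    have "expect_rand N \<delta> G \<le> expect_rand N \<delta> (\<lambda>S. real (card N) - H S)"
      by (rule expect_rand_mono[OF \<open>0 \<le> \<delta>\<close> \<open>\<delta> \<le> 1\<close> that])
    then show ?thesis by (simp add: expect_rand_diff expect_rand_const finN)
  qed
  moreover have "G S \<le> real (card N) - L S" for S
    unfolding G_def L_def by (rule real_card_le_diff_of_disjoint[OF finN]) auto
  moreover have "G S \<le> real (card N) - B S" for S
    unfolding G_def B_def
    by (rule real_card_le_diff_of_disjoint[OF finN]) (use matchoid_span_subset[OF M] in \<open>auto simp: Sp_def\<close>)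
  ultimately have "expect_rand N \<delta> G \<le> real (card N) - eps * real (card N)" by fastforce
  then show ?thesis unfolding G_def c_def Sp_def by (simp add: left_diff_distrib)
qed

lemma greedy_block_randI:
  assumes "finite N" "0 \<le> \<alpha>" "0 \<le> \<delta>" "\<delta> \<le> 1" "0 \<le> lam" "\<forall>e\<in>N. f {e} \<le> lam"
    and "\<forall>S\<subseteq>N. Imap S \<subseteq> S \<and> Imap S \<in> Ind"
    and "\<alpha> * lam * expect_rand N \<delta> (\<lambda>S. real (card S)) \<le> expect_rand N \<delta> (\<lambda>S. f (Imap S))"
  shows "greedy_block_rand N Ind f \<alpha> \<delta> Imap"
  unfolding greedy_block_rand_def
proof (intro conjI assms(7))
  let ?m = "max 0 (if N = {} then 0 else Max ((\<lambda>e. f {e}) ` N))"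
  have "Max ((\<lambda>e. f {e}) ` N) \<le> lam" if "N \<noteq> {}"
    using that assms(1,6) by (intro Max.boundedI) auto
  then have "?m \<le> lam" using assms(5) by simp
  moreover have "0 \<le> \<alpha> * expect_rand N \<delta> (\<lambda>S. real (card S))"
    using assms(2-4) by (simp add: expect_rand_card assms(1))
  ultimately have "\<alpha> * expect_rand N \<delta> (\<lambda>S. real (card S)) * ?m
      \<le> \<alpha> * expect_rand N \<delta> (\<lambda>S. real (card S)) * lam"
    by (rule mult_left_mono)
  then show "\<alpha> * expect_rand N \<delta> (\<lambda>S. real (card S)) * ?m \<le> expect_rand N \<delta> (\<lambda>S. f (Imap S))"
    using assms(8) by (simp add: ac_simps)
qed

theorem mainTheorem5:
  fixes N :: "'a set" and J :: "'j set" and Nj :: "'j \<Rightarrow> 'a set" and Ij :: "'j \<Rightarrow> 'a set set"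
    and p :: nat and f :: "'a set \<Rightarrow> real" and eps lam delta :: real
  defines "Ind \<equiv> matchoid_indep N J Nj Ij"
    and "C1 \<equiv> \<lambda>d. expect_rand N d (\<lambda>S. real (card {e \<in> N. marg f S e \<le> (1 - eps) * lam}))
                   \<le> eps * real (card N)"
    and "C2 \<equiv> \<lambda>d. expect_rand N d (\<lambda>S. real (card (matchoid_span J Nj Ij S))) \<le> eps * real (card N)"
    and "Imap \<equiv> \<lambda>S. {e \<in> S. marg f (S - {e}) e \<ge> (1 - eps) * lam \<and> e \<notin> matchoid_span J Nj Ij (S - {e})}"
  assumes M: "p_matchoid N J Nj Ij p"
    and fnorm: "normalized f" and fsub: "submodular_on N f"
    and epsb: "0 < eps" "eps < 1/3"
    and lamb: "lam \<ge> 0" "\<forall>e\<in>N. (1 - eps) * lam \<le> f {e} \<and> f {e} \<le> lam"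
    and deltab: "0 \<le> delta" "delta \<le> 1" "C1 delta" "C2 delta"
    and delta_max: "\<forall>d. 0 \<le> d \<and> d \<le> 1 \<and> C1 d \<and> C2 d \<longrightarrow> d \<le> delta"
  shows "(\<forall>S\<subseteq>N. Imap S \<subseteq> S \<and> Imap S \<in> Ind)
       \<and> expect_rand N delta (\<lambda>S. f (Imap S)) \<ge> (1 - 3 * eps) * lam * expect_rand N delta (\<lambda>S. real (card S))
       \<and> greedy_block_rand N Ind f (1 - 3 * eps) delta Imap
       \<and> expect_rand N delta (\<lambda>S. real (card {e \<in> N - matchoid_span J Nj Ij S. marg f S e > (1 - eps) * lam}))
           \<le> (1 - eps) * real (card N)"
proof -
  have finN: "finite N" using M by (simp add: p_matchoid_def)
  have core: "Imap = greedy_core f J Nj Ij ((1 - eps) * lam)"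
    unfolding Imap_def greedy_core_def ..
  have indep: "\<forall>S\<subseteq>N. Imap S \<subseteq> S \<and> Imap S \<in> Ind"
    unfolding core Ind_def by (simp add: greedy_core_subset greedy_core_indep[OF M])
  have gain: "(1 - 3 * eps) * lam * expect_rand N delta (\<lambda>S. real (card S))
      \<le> expect_rand N delta (\<lambda>S. f (Imap S))"
    unfolding core using epsb lamb(1) deltab(1,2)
    by (intro expected_greedy_core_value_ge[OF M fnorm fsub]) (use deltab(3,4) in \<open>simp_all add: C1_def C2_def\<close>)
  \<comment> \<open>Of the bounds on singleton values only \<open>f {e} \<le> lam\<close> is needed.\<close>
  have "greedy_block_rand N Ind f (1 - 3 * eps) delta Imap"
    using epsb deltab(1,2) lamb by (intro greedy_block_randI[OF finN _ _ _ _ _ indep gain]) auto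
  moreover have "expect_rand N delta
        (\<lambda>S. real (card {e \<in> N - matchoid_span J Nj Ij S. marg f S e > (1 - eps) * lam}))
      \<le> (1 - eps) * real (card N)"
    by (rule expected_free_high_gain_le[OF M _ lamb(1) deltab(1,2)])
       (use epsb deltab(3) delta_max in \<open>unfold C1_def C2_def, simp_all\<close>)
  ultimately show ?thesis using indep gain by blast
qed

end
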